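(* Let $\mathcal U$ be an unbalanced critical update family and $\mathcal S_U$ as in the context. There is a constant $c>0$ depending only on $\mathcal U$ such that for every $A\subset\mathbb Z^2$ and every $\mathcal S_U$-droplet $D$ internally spanned by $A$, $|D\cap A|\ge c\cdot\operatorname{diam}(D)$.
   Context: Update family $\mathcal U$: finite collection of finite subsets of $\mathbb Z^2\setminus\{0\}$, $A_{t+1}=A_t\cup\{x:x+X\subset A_t,\ X\in\mathcal U\}$, $[A]=\bigcup_tA_t$. $\mathbb H_u(a)=\{x\in\mathbb Z^2:\langle x-a,u\rangle<0\}$, $\mathbb H_u=\mathbb H_u(0)$. For rational $u$, $\alpha^\pm(u)$ is the minimal $|Z|$ with $[\mathbb H_u\cup Z]$ containing infinitely many sites of $\ell_u^\pm$ (origin plus sites of $\{x:\langle x,u\rangle=0\}$ right/left of origin looking in direction $u$); $\bar\alpha(u)=\min\{\alpha^+,\alpha^-\}$; $\alpha(u)=\bar\alpha(u)$ if both finite else $\infty$; $\alpha=\alpha(\mathcal U)=\min$ over open semicircles $C$ of $\sup_{u\in C}\alpha(u)$. Unbalanced critical: $1\le\alpha<\infty$ and no closed semicircle has $\alpha(u)\le\alpha$ throughout. $\mathcal S_U=\{u^*,-u^*,u^l,u^r\}$ is fixed with $u^l,u^r$ in opposite open semicircles separated by $\pm u^*$, $\min\{\alpha(u^* ),\alpha(-u^* )\}\ge\alpha+1$, $\min\{\bar\alpha(u^l),\bar\alpha(u^r)\}=\alpha$. An $\mathcal S_U$-droplet is a non-empty set $\bigcap_{u\in\mathcal S_U}\mathbb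 H_u(a_u)$, $a_u\in\mathbb Z^2$. $\nu=\max\{\|x-y\|:x,y\in X\cup\{0\},X\in\mathcal U\}$, $\kappa=3\nu$; strongly connected means connected in the graph on $\mathbb Z^2$ joining $x,y$ with $\|x-y\|_2\le\kappa$. $D$ is internally spanned by $A$ if some strongly connected $L\subset[D\cap A]$ has $D$ as the smallest $\mathcal S_U$-droplet containing $L$. $\operatorname{diam}(K)=\max\{\|x-y\|:x,y\in K\}$. *)

theory Defs
  imports "HOL-Analysis.Analysis" "HOL-Library.Extended_Nat"
begin

type_synonym pt = "int \<times> int"

definition dot :: "pt \<Rightarrow> pt \<Rightarrow> int" where
  "dot x y = fst x * fst y + snd x * snd y"

definition dotr :: "pt \<Rightarrow> real \<times> real \<Rightarrow> real" where
  "dotr x v = real_of_int (fst x) * fst v + real_of_int (snd x) * snd v"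

(* cross product: positive iff y points to the left of x (counterclockwise) *)
definition cross :: "pt \<Rightarrow> pt \<Rightarrow> int" where
  "cross x y = fst x * snd y - snd x * fst y"

definition eucnorm :: "pt \<Rightarrow> real" where
  "eucnorm x = sqrt (real_of_int (fst x)^2 + real_of_int (snd x)^2)"

definition update_family :: "pt set set \<Rightarrow> bool" where
  "update_family U \<longleftrightarrow> finite U \<and> (\<forall>X\<in>U. finite X \<and> X \<subseteq> UNIV - {0})"

definition bp_step :: "pt set set \<Rightarrow> pt set \<Rightarrow> pt set" where
  "bp_step U A = A \<union> {x. \<exists>X\<in>U. (\<lambda>y. x + y) ` X \<subseteq> A}"

definition bp_closure :: "pt set set \<Rightarrow> pt set \<Rightarrow> pt set" where
  "bp_closure U A = (\<Union>t::nat. (bp_step U ^^ t) A)"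

definition halfplane :: "pt \<Rightarrow> pt \<Rightarrow> pt set" where
  "halfplane u a = {x. dot (x - a) u < 0}"

(* l_u^+ / l_u^- : origin plus sites of the line <x,u>=0 right / left of the
   origin looking in direction u; the right of u=(a,b) is (b,-a) *)
definition line_plus :: "pt \<Rightarrow> pt set" where
  "line_plus u = {x. dot x u = 0 \<and> dot x (snd u, - fst u) \<ge> 0}"

definition line_minus :: "pt \<Rightarrow> pt set" where
  "line_minus u = {x. dot x u = 0 \<and> dot x (snd u, - fst u) \<le> 0}"

definition alpha_plus :: "pt set set \<Rightarrow> pt \<Rightarrow> enat" where
  "alpha_plus U u = Inf {enat (card Z) | Z. finite Z \<and>
      infinite (bp_closure U (halfplane u 0 \<union> Z) \<inter> line_plus u)}"

definition alpha_minus :: "pt set set \<Rightarrow> pt \<Rightarrow> enat" where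
  "alpha_minus U u = Inf {enat (card Z) | Z. finite Z \<and>
      infinite (bp_closure U (halfplane u 0 \<union> Z) \<inter> line_minus u)}"

definition alpha_bar :: "pt set set \<Rightarrow> pt \<Rightarrow> enat" where
  "alpha_bar U u = min (alpha_plus U u) (alpha_minus U u)"

definition alpha_dir :: "pt set set \<Rightarrow> pt \<Rightarrow> enat" where
  "alpha_dir U u = (if alpha_plus U u \<noteq> \<infinity> \<and> alpha_minus U u \<noteq> \<infinity>
                     then alpha_bar U u else \<infinity>)"

(* open semicircles are {u. <u,v> > 0} for v \<noteq> 0; rational directions are
   represented by non-zero integer vectors *)
definition alpha_fam :: "pt set set \<Rightarrow> enat" where
  "alpha_fam U = (INF v\<in>{v::real\<times>real. v \<noteq> 0}.
                   SUP u\<in>{u::pt. u \<noteq> 0 \<and> dotr u v > 0}. alpha_dir U u)"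

definition unbalanced_critical :: "pt set set \<Rightarrow> bool" where
  "unbalanced_critical U \<longleftrightarrow>
     1 \<le> alpha_fam U \<and> alpha_fam U < \<infinity> \<and>
     \<not> (\<exists>v::real\<times>real. v \<noteq> 0 \<and>
          (\<forall>u::pt. u \<noteq> 0 \<and> dotr u v \<ge> 0 \<longrightarrow> alpha_dir U u \<le> alpha_fam U))"

definition is_droplet :: "pt set \<Rightarrow> pt set \<Rightarrow> bool" where
  "is_droplet S D \<longleftrightarrow> D \<noteq> {} \<and> (\<exists>a::pt \<Rightarrow> pt. D = (\<Inter>u\<in>S. halfplane u (a u)))"

definition nu :: "pt set set \<Rightarrow> real" where
  "nu U = Max {eucnorm (x - y) | x y X. X \<in> U \<and> x \<in> insert 0 X \<and> y \<in> insert 0 X}"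

definition kappa :: "pt set set \<Rightarrow> real" where
  "kappa U = 3 * nu U"

definition strongly_connected :: "real \<Rightarrow> pt set \<Rightarrow> bool" where
  "strongly_connected k L \<longleftrightarrow> L \<noteq> {} \<and>
     (\<forall>x\<in>L. \<forall>y\<in>L. (x, y) \<in> {(p, q). p \<in> L \<and> q \<in> L \<and> eucnorm (p - q) \<le> k}\<^sup>*)"

definition smallest_droplet :: "pt set \<Rightarrow> pt set \<Rightarrow> pt set \<Rightarrow> bool" where
  "smallest_droplet S L D \<longleftrightarrow> is_droplet S D \<and> L \<subseteq> D \<and>
     (\<forall>D'. is_droplet S D' \<and> L \<subseteq> D' \<longrightarrow> D \<subseteq> D')"

definition internally_spanned :: "pt set set \<Rightarrow> pt set \<Rightarrow> pt set \<Rightarrow> pt set \<Rightarrow> bool" where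
  "internally_spanned U S D A \<longleftrightarrow>
     (\<exists>L. L \<subseteq> bp_closure U (D \<inter> A) \<and> strongly_connected (kappa U) L \<and>
          smallest_droplet S L D)"

definition diam :: "pt set \<Rightarrow> real" where
  "diam K = Max {eucnorm (x - y) | x y. x \<in> K \<and> y \<in> K}"

end

theory Submission
  imports Defs
begin

(* Both halves of the argument are geometric and only use that \<alpha> \<ge> 1 and that
   the droplet directions S_U positively span the plane (which follows from the
   orientation hypotheses on u^l, u^r).

   (1) Since \<alpha> \<ge> 1, every open semicircle contains a stable direction u (no update
   rule lies inside H_u).  By compactness finitely many stable directions span the
   plane uniformly.  Polygons with these outer normals are closed under a single
   update rule; starting from a radius-0 polygon at each site of B and merging any
   two polygons at distance at most \<kappa> yields separated polygons whose union is
   closed, contains [B] and has total radius O(|B|).  A strongly connected subset of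
   [B] lies in one of them, so its diameter is O(|B|).

   (2) Because S_U positively spans the plane, the smallest S_U-droplet containing a
   set of diameter R has diameter O(R + 1).

   For D internally spanned by A, apply (1) to B = D \<inter> A and the witnessing set L,
   and (2) to L; since L is non-empty, |B| \<ge> 1 and diam D = O(|D \<inter> A|). *)

definition rv :: "pt \<Rightarrow> real \<times> real" where
  "rv x = (real_of_int (fst x), real_of_int (snd x))"

lemma fst_rv [simp]: "fst (rv x) = real_of_int (fst x)"
  and snd_rv [simp]: "snd (rv x) = real_of_int (snd x)"
  by (simp_all add: rv_def)

lemma rv_diff [simp]: "rv (x - y) = rv x - rv y"
  by (simp add: rv_def)

lemma rv_add [simp]: "rv (x + y) = rv x + rv y"
  by (simp add: rv_def)

lemma norm_rv: "norm (rv x) = eucnorm x"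
  by (simp add: rv_def eucnorm_def norm_Pair)

lemma inner_rv: "rv u \<bullet> v = real_of_int (fst u) * fst v + real_of_int (snd u) * snd v"
  by (cases v) (simp add: rv_def inner_Pair)

lemma dotr_eq_inner: "dotr u v = rv u \<bullet> v"
  by (simp add: dotr_def inner_rv)

lemma dot_eq_inner: "real_of_int (dot x u) = rv x \<bullet> rv u"
  by (simp add: dot_def inner_rv rv_def)

lemma norm_rv_ge_1:
  assumes "u \<noteq> 0"
  shows "1 \<le> norm (rv u)"
proof -
  have square_ge_1: "1 \<le> a * a" if "a \<noteq> 0" for a :: int
    using that by (smt (verit, best) mult_eq_0_iff zero_le_mult_iff)
  have "fst u \<noteq> 0 \<or> snd u \<noteq> 0"
    using assms by (cases u) (auto simp: zero_prod_def)
  then have "1 \<le> fst u * fst u + snd u * snd u"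
    using square_ge_1 by (smt (verit) zero_le_square)
  then have "1 \<le> dot u u"
    by (simp add: dot_def)
  then have "1 \<le> real_of_int (dot u u)"
    by simp
  then have "1 \<le> norm (rv u) ^ 2"
    by (simp only: power2_norm_eq_inner dot_eq_inner)
  then show ?thesis
    by (metis power2_nonneg_ge_1_iff norm_ge_zero)
qed

lemma finite_norm_bound:
  assumes "finite S"
  shows "\<exists>M\<ge>1. \<forall>u\<in>S. norm (rv u) \<le> M"
  using assms by (intro exI[of _ "Max (insert 1 ((\<lambda>u. norm (rv u)) ` S))"]) auto

lemma abs_le_norm_pair:
  fixes v :: "real \<times> real"
  shows "\<bar>fst v\<bar> \<le> norm v" and "\<bar>snd v\<bar> \<le> norm v"
  using norm_fst_le[of "fst v" "snd v"] norm_snd_le[of "snd v" "fst v"] by auto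

lemma finite_bounded_points: "finite {x::pt. norm (rv x - c) \<le> K}"
proof -
  let ?N = "\<lceil>K + norm c\<rceil>"
  have "{x::pt. norm (rv x - c) \<le> K} \<subseteq> {-?N..?N} \<times> {-?N..?N}"
  proof
    fix x :: pt assume "x \<in> {x. norm (rv x - c) \<le> K}"
    then have "norm (rv x) \<le> K + norm c"
      by (smt (verit, best) mem_Collect_eq norm_triangle_ineq2)
    moreover have "\<bar>real_of_int (fst x)\<bar> \<le> norm (rv x)" "\<bar>real_of_int (snd x)\<bar> \<le> norm (rv x)"
      using abs_le_norm_pair[of "rv x"] by (simp_all add: rv_def)
    ultimately have "\<bar>fst x\<bar> \<le> ?N" "\<bar>snd x\<bar> \<le> ?N"
      by (simp_all add: le_ceiling_iff)
    then show "x \<in> {-?N..?N} \<times> {-?N..?N}" by (cases x) auto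
  qed
  then show ?thesis using finite_subset by blast
qed

definition uniformly_spanning :: "pt set \<Rightarrow> real \<Rightarrow> bool" where
  "uniformly_spanning S \<delta> \<longleftrightarrow> 0 < \<delta> \<and> (\<forall>v. \<exists>u\<in>S. \<delta> * norm v \<le> rv u \<bullet> v)"

lemma uniformly_spanning_norm_bound:
  assumes "uniformly_spanning S \<delta>" and "\<forall>u\<in>S. rv u \<bullet> w \<le> r"
  shows "norm w \<le> r / \<delta>"
proof -
  obtain u where "u \<in> S" "\<delta> * norm w \<le> rv u \<bullet> w" and "0 < \<delta>"
    using assms(1) unfolding uniformly_spanning_def by blast
  then have "\<delta> * norm w \<le> r" using assms(2) by force
  then show ?thesis using \<open>0 < \<delta>\<close> by (simp add: field_simps)
qed

(* Compactness of the unit circle: if every non-zero vector has positive inner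
   product with some direction of P, then finitely many directions of P already
   span the plane uniformly. *)
lemma uniformly_spanning_exists:
  assumes pos: "\<And>v. v \<noteq> 0 \<Longrightarrow> \<exists>u\<in>P. 0 < rv u \<bullet> v"
  shows "\<exists>S \<delta>. finite S \<and> S \<subseteq> P \<and> uniformly_spanning S \<delta>"
proof -
  define cap where "cap = (\<lambda>(u, k::nat). {v::real\<times>real. 1 / (real k + 1) < rv u \<bullet> v})"
  have open_cap: "open (cap p)" for p
    by (cases p) (simp add: cap_def open_Collect_less continuous_intros)
  have cover: "sphere (0::real\<times>real) 1 \<subseteq> (\<Union>p\<in>P \<times> UNIV. cap p)"
  proof
    fix v :: "real\<times>real" assume "v \<in> sphere 0 1"
    then have "v \<noteq> 0" by auto
    then obtain u where u: "u \<in> P" "0 < rv u \<bullet> v" using pos by blast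
    then obtain k :: nat where "inverse (real (Suc k)) < rv u \<bullet> v"
      using reals_Archimedean by blast
    then show "v \<in> (\<Union>p\<in>P \<times> UNIV. cap p)"
      using u(1) by (intro UN_I[of "(u, k)"]) (auto simp: cap_def inverse_eq_divide add.commute)
  qed
  from compactE_image[OF compact_sphere, of "P \<times> UNIV" cap, OF open_cap cover]
  obtain C where C: "C \<subseteq> P \<times> UNIV" "finite C" "sphere (0::real\<times>real) 1 \<subseteq> (\<Union>p\<in>C. cap p)"
    by blast
  define \<delta> where "\<delta> = 1 / (real (Max (snd ` C)) + 1)"
  have unit: "\<exists>u\<in>fst ` C. \<delta> \<le> rv u \<bullet> v" if "norm v = 1" for v
  proof -
    from C(3) that obtain p where "p \<in> C" "v \<in> cap p" by auto
    moreover obtain u k where "p = (u, k)" by fastforce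
    ultimately have uk: "(u, k) \<in> C" "1 / (real k + 1) < rv u \<bullet> v"
      by (auto simp: cap_def)
    have "k \<le> Max (snd ` C)" using uk(1) C(2) by (metis Max_ge finite_imageI image_eqI snd_conv)
    then have "\<delta> \<le> 1 / (real k + 1)" unfolding \<delta>_def by (simp add: frac_le)
    then show ?thesis using uk by (intro bexI[of _ u]) (auto intro: image_eqI[of _ _ "(u, k)"])
  qed
  have "(1, 0) \<in> sphere (0::real\<times>real) 1"
    by (simp add: norm_Pair)
  then have "C \<noteq> {}" using C(3) by auto
  have "\<exists>u\<in>fst ` C. \<delta> * norm v \<le> rv u \<bullet> v" for v
  proof (cases "v = 0")
    case True then show ?thesis using \<open>C \<noteq> {}\<close> by auto
  next
    case False
    then have "norm (v /\<^sub>R norm v) = 1" by simp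
    then obtain u where "u \<in> fst ` C" "\<delta> \<le> rv u \<bullet> (v /\<^sub>R norm v)"
      using unit by blast
    moreover have "rv u \<bullet> (v /\<^sub>R norm v) = (rv u \<bullet> v) / norm v"
      by (simp add: divide_inverse_commute)
    ultimately show ?thesis using False by (auto simp: field_simps)
  qed
  moreover have "0 < \<delta>" unfolding \<delta>_def by simp
  ultimately have "uniformly_spanning (fst ` C) \<delta>" unfolding uniformly_spanning_def by blast
  then show ?thesis using C(1,2) by (intro exI[of _ "fst ` C"]) auto
qed

(* u is stable if no update rule lies entirely in the open half-plane H_u; then
   half-planes with outer normal u cannot grow. *)
definition stable_direction :: "pt set set \<Rightarrow> pt \<Rightarrow> bool" where
  "stable_direction U u \<longleftrightarrow> (\<forall>X\<in>U. \<exists>y\<in>X. 0 \<le> dot y u)"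

lemma line_halves_infinite:
  assumes "u \<noteq> 0"
  shows "infinite (line_plus u)" and "infinite (line_minus u)"
proof -
  define d where "d = (snd u, - fst u)"
  define f where "f = (\<lambda>k::nat. (int k * fst d, int k * snd d))"
  define g where "g = (\<lambda>k::nat. - f k)"
  have "d \<noteq> 0" using assms by (cases u) (auto simp: d_def zero_prod_def)
  then have "inj f" "inj g"
    by (auto intro!: injI simp: f_def g_def zero_prod_def prod_eq_iff)
  have "dot (f k) u = 0" "dot (f k) d = int k * dot d d"
    and "dot (g k) u = 0" "dot (g k) d = - (int k * dot d d)" for k
    by (simp_all add: f_def g_def d_def dot_def algebra_simps)
  moreover have "0 \<le> dot d d" by (simp add: dot_def)
  ultimately have "range f \<subseteq> line_plus u" "range g \<subseteq> line_minus u"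
    by (auto simp: line_plus_def line_minus_def d_def[symmetric])
  then show "infinite (line_plus u)" "infinite (line_minus u)"
    using \<open>inj f\<close> \<open>inj g\<close> range_inj_infinite infinite_super by blast+
qed

(* If u is unstable, one step from H_u already fills the whole line through the
   origin orthogonal to u, so \<alpha>(u) = 0. *)
lemma alpha_dir_unstable:
  assumes "u \<noteq> 0" and "\<not> stable_direction U u"
  shows "alpha_dir U u = 0"
proof -
  obtain X where X: "X \<in> U" "\<forall>y\<in>X. dot y u < 0"
    using assms(2) unfolding stable_direction_def by force
  have "(\<lambda>y. x + y) ` X \<subseteq> halfplane u 0" if "dot x u = 0" for x
    using X(2) that by (auto simp: halfplane_def dot_def algebra_simps)
  then have "{x. dot x u = 0} \<subseteq> bp_step U (halfplane u 0)"
    using X(1) unfolding bp_step_def by blast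
  also have "\<dots> \<subseteq> bp_closure U (halfplane u 0 \<union> {})"
    unfolding bp_closure_def using UN_upper[of 1 UNIV "\<lambda>t. (bp_step U ^^ t) (halfplane u 0 \<union> {})"]
    by simp
  finally have line: "{x. dot x u = 0} \<subseteq> bp_closure U (halfplane u 0 \<union> {})" .
  have "line_plus u \<subseteq> bp_closure U (halfplane u 0 \<union> {}) \<inter> line_plus u"
    using line by (auto simp: line_plus_def)
  then have "infinite (bp_closure U (halfplane u 0 \<union> {}) \<inter> line_plus u)"
    using line_halves_infinite(1)[OF assms(1)] infinite_super by blast
  then have "alpha_plus U u \<le> enat (card ({}::pt set))"
    unfolding alpha_plus_def by (intro Inf_lower) blast
  moreover have "line_minus u \<subseteq> bp_closure U (halfplane u 0 \<union> {}) \<inter> line_minus u"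
    using line by (auto simp: line_minus_def)
  then have "infinite (bp_closure U (halfplane u 0 \<union> {}) \<inter> line_minus u)"
    using line_halves_infinite(2)[OF assms(1)] infinite_super by blast
  then have "alpha_minus U u \<le> enat (card ({}::pt set))"
    unfolding alpha_minus_def by (intro Inf_lower) blast
  ultimately have "alpha_plus U u = 0 \<and> alpha_minus U u = 0"
    by (simp add: zero_enat_def[symmetric])
  then show ?thesis
    by (simp add: alpha_dir_def alpha_bar_def)
qed

lemma stable_direction_exists:
  assumes "1 \<le> alpha_fam U" and "v \<noteq> 0"
  shows "\<exists>u\<in>{u. u \<noteq> 0 \<and> stable_direction U u}. 0 < rv u \<bullet> v"
proof (rule ccontr)
  assume none: "\<not> ?thesis"
  have "alpha_fam U \<le> (SUP u\<in>{u::pt. u \<noteq> 0 \<and> dotr u v > 0}. alpha_dir U u)"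
    unfolding alpha_fam_def using assms(2) by (intro INF_lower) auto
  also have "\<dots> \<le> 0"
  proof (rule SUP_least)
    fix u assume "u \<in> {u::pt. u \<noteq> 0 \<and> dotr u v > 0}"
    then have "u \<noteq> 0" "0 < rv u \<bullet> v" by (auto simp: dotr_eq_inner)
    then have "\<not> stable_direction U u" using none by blast
    then show "alpha_dir U u \<le> 0" using alpha_dir_unstable \<open>u \<noteq> 0\<close> by simp
  qed
  finally show False
    using assms(1) by (metis not_one_le_zero order_trans)
qed

definition polygon :: "pt set \<Rightarrow> real \<times> real \<Rightarrow> real \<Rightarrow> pt set" where
  "polygon S c r = {x. \<forall>u\<in>S. rv u \<bullet> (rv x - c) \<le> r}"

lemma polygon_radius:
  assumes "uniformly_spanning S \<delta>" and "x \<in> polygon S c r"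
  shows "norm (rv x - c) \<le> r / \<delta>"
  using assms uniformly_spanning_norm_bound unfolding polygon_def by blast

lemma bp_closure_least:
  assumes "bp_step U W \<subseteq> W" and "B \<subseteq> W"
  shows "bp_closure U B \<subseteq> W"
proof -
  have "(bp_step U ^^ t) B \<subseteq> W" for t
  proof (induction t)
    case 0
    then show ?case using assms(2) by simp
  next
    case (Suc t)
    then have "bp_step U ((bp_step U ^^ t) B) \<subseteq> bp_step U W"
      unfolding bp_step_def by blast
    then show ?case using assms(1) by simp
  qed
  then show ?thesis unfolding bp_closure_def by blast
qed

lemma bp_closure_empty:
  assumes "\<forall>X\<in>U. X \<noteq> {}"
  shows "bp_closure U {} = {}"
  using assms bp_closure_least[of U "{}" "{}"] unfolding bp_step_def by auto

lemma rule_width_le_kappa: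
  assumes "update_family U" and "X \<in> U" and "y \<in> X" and "z \<in> X"
  shows "eucnorm (y - z) \<le> kappa U"
proof -
  let ?T = "{eucnorm (x - y) | x y X. X \<in> U \<and> x \<in> insert 0 X \<and> y \<in> insert 0 X}"
  have "?T \<subseteq> (\<lambda>(x, y). eucnorm (x - y)) ` (\<Union>X\<in>U. insert 0 X \<times> insert 0 X)"
    by fastforce
  moreover have "finite (\<Union>X\<in>U. insert 0 X \<times> insert 0 X)"
    using assms(1) unfolding update_family_def by auto
  ultimately have "finite ?T" using finite_subset by blast
  moreover have "eucnorm (y - z) \<in> ?T" "eucnorm (y - y) \<in> ?T" using assms by blast+
  ultimately have "eucnorm (y - z) \<le> nu U" "0 \<le> nu U"
    unfolding nu_def by (auto intro: Max_ge simp: eucnorm_def[of 0] Max_ge_iff)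
  then show ?thesis unfolding kappa_def by linarith
qed

lemma polygon_escape:
  assumes "\<forall>u\<in>S. stable_direction U u" and "x \<notin> polygon S c r" and "X \<in> U"
  shows "\<exists>y\<in>X. x + y \<notin> polygon S c r"
proof -
  obtain u where u: "u \<in> S" "r < rv u \<bullet> (rv x - c)"
    using assms(2) unfolding polygon_def by force
  obtain y where y: "y \<in> X" "0 \<le> dot y u"
    using assms(1,3) u(1) unfolding stable_direction_def by blast
  have "rv u \<bullet> (rv (x + y) - c) = rv u \<bullet> (rv x - c) + real_of_int (dot y u)"
    by (simp add: dot_eq_inner inner_commute algebra_simps inner_add_right inner_diff_right)
  then have "r < rv u \<bullet> (rv (x + y) - c)" using u(2) y(2) by linarith
  then show ?thesis using y(1) u(1) unfolding polygon_def by force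
qed

definition separated :: "pt set \<Rightarrow> real \<Rightarrow> ((real \<times> real) \<times> real) set \<Rightarrow> bool" where
  "separated S k G \<longleftrightarrow> (\<forall>a\<in>G. \<forall>b\<in>G. a \<noteq> b \<longrightarrow>
      (\<forall>p\<in>polygon S (fst a) (snd a). \<forall>q\<in>polygon S (fst b) (snd b). k < eucnorm (p - q)))"

(* A union of separated polygons with stable normals is closed under the
   dynamics, since each rule has diameter at most \<kappa> and thus meets one polygon. *)
lemma separated_polygons_closed:
  assumes "update_family U" and "\<forall>u\<in>S. stable_direction U u" and "\<forall>X\<in>U. X \<noteq> {}"
    and "separated S (kappa U) G"
  shows "bp_step U (\<Union>a\<in>G. polygon S (fst a) (snd a)) \<subseteq> (\<Union>a\<in>G. polygon S (fst a) (snd a))"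
    (is "bp_step U ?W \<subseteq> ?W")
proof
  fix x assume "x \<in> bp_step U ?W"
  then consider "x \<in> ?W" | X where "X \<in> U" "(\<lambda>y. x + y) ` X \<subseteq> ?W"
    unfolding bp_step_def by blast
  then show "x \<in> ?W"
  proof cases
    case 2
    obtain y0 where y0: "y0 \<in> X" using assms(3) 2(1) by blast
    obtain a where a: "a \<in> G" "x + y0 \<in> polygon S (fst a) (snd a)" using 2(2) y0 by blast
    have "x + y \<in> polygon S (fst a) (snd a)" if y: "y \<in> X" for y
    proof -
      obtain b where b: "b \<in> G" "x + y \<in> polygon S (fst b) (snd b)" using 2(2) y by blast
      have "eucnorm ((x + y0) - (x + y)) \<le> kappa U"
        using rule_width_le_kappa[OF assms(1) 2(1) y0 y] by simp
      then have "a = b" using assms(4) a b unfolding separated_def by force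
      then show ?thesis using b by simp
    qed
    then have "x \<in> polygon S (fst a) (snd a)" using polygon_escape[OF assms(2) _ 2(1)] by blast
    then show ?thesis using a(1) by blast
  qed
qed

lemma connected_in_one_polygon:
  assumes "separated S k G" and "L \<subseteq> (\<Union>a\<in>G. polygon S (fst a) (snd a))"
    and "strongly_connected k L" and "x0 \<in> L" and "a \<in> G" and "x0 \<in> polygon S (fst a) (snd a)"
  shows "L \<subseteq> polygon S (fst a) (snd a)"
proof
  fix y assume "y \<in> L"
  then have "(x0, y) \<in> {(p, q). p \<in> L \<and> q \<in> L \<and> eucnorm (p - q) \<le> k}\<^sup>*"
    using assms(3,4) unfolding strongly_connected_def by blast
  then show "y \<in> polygon S (fst a) (snd a)"
  proof (induction rule: rtrancl_induct)
    case base
    then show ?case using assms(6) .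
  next
    case (step p q)
    then have "q \<in> L" "eucnorm (p - q) \<le> k" by auto
    then obtain b where b: "b \<in> G" "q \<in> polygon S (fst b) (snd b)" using assms(2) by blast
    then have "a = b" using assms(1,5) step.IH \<open>eucnorm (p - q) \<le> k\<close> unfolding separated_def by force
    then show ?case using b by simp
  qed
qed

definition weight :: "real \<Rightarrow> ((real \<times> real) \<times> real) set \<Rightarrow> real" where
  "weight m G = (\<Sum>a\<in>G. snd a + m)"

lemma polygon_merge:
  assumes step: "\<And>u w. u \<in> S \<Longrightarrow> norm w \<le> k \<Longrightarrow> rv u \<bullet> w \<le> m" and "0 \<le> m"
    and p: "p \<in> polygon S c1 r1" and q: "q \<in> polygon S c2 r2" and "eucnorm (p - q) \<le> k"
  shows "polygon S c1 r1 \<union> polygon S c2 r2 \<subseteq> polygon S (c1 + c2 - rv q) (r1 + r2 + m)"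
proof
  fix x assume x: "x \<in> polygon S c1 r1 \<union> polygon S c2 r2"
  have "rv u \<bullet> (rv x - (c1 + c2 - rv q)) \<le> r1 + r2 + m" if u: "u \<in> S" for u
  proof -
    have "norm (rv q - rv p) \<le> k"
      using \<open>eucnorm (p - q) \<le> k\<close> by (metis norm_minus_commute norm_rv rv_diff)
    then have qp: "rv u \<bullet> (rv q - rv p) \<le> m" using step[OF u] by blast
    have p1: "rv u \<bullet> (rv p - c1) \<le> r1" and q2: "rv u \<bullet> (rv q - c2) \<le> r2"
      using p q u unfolding polygon_def by auto
    show ?thesis
    proof (cases "x \<in> polygon S c1 r1")
      case True
      then have "rv u \<bullet> (rv x - c1) \<le> r1" using u unfolding polygon_def by auto
      moreover have "rv u \<bullet> (rv x - (c1 + c2 - rv q)) = rv u \<bullet> (rv x - c1) + rv u \<bullet> (rv q - c2)"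
        by (simp add: inner_diff_right inner_add_right)
      ultimately show ?thesis using q2 \<open>0 \<le> m\<close> by linarith
    next
      case False
      then have "rv u \<bullet> (rv x - c2) \<le> r2" using x u unfolding polygon_def by auto
      moreover have "rv u \<bullet> (rv x - (c1 + c2 - rv q))
          = rv u \<bullet> (rv x - c2) + rv u \<bullet> (rv q - rv p) + rv u \<bullet> (rv p - c1)"
        by (simp add: inner_diff_right inner_add_right)
      ultimately show ?thesis using qp p1 by linarith
    qed
  qed
  then show "x \<in> polygon S (c1 + c2 - rv q) (r1 + r2 + m)" unfolding polygon_def by blast
qed

lemma weight_insert_le:
  assumes "finite G" and "0 \<le> snd a + m"
  shows "weight m (insert a G) \<le> weight m G + (snd a + m)"
  using assms by (cases "a \<in> G") (simp_all add: weight_def insert_absorb)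

lemma merge_into_separated:
  assumes step: "\<And>u w. u \<in> S \<Longrightarrow> norm w \<le> k \<Longrightarrow> rv u \<bullet> w \<le> m" and "0 \<le> m"
    and "finite F" and "\<forall>a\<in>F. 0 \<le> snd a"
  shows "\<exists>G. finite G \<and> (\<forall>a\<in>G. 0 \<le> snd a) \<and>
           (\<Union>a\<in>F. polygon S (fst a) (snd a)) \<subseteq> (\<Union>a\<in>G. polygon S (fst a) (snd a)) \<and>
           weight m G \<le> weight m F \<and> separated S k G"
  using assms(3,4)
proof (induction "card F" arbitrary: F rule: less_induct)
  case less
  show ?case
  proof (cases "separated S k F")
    case True
    then show ?thesis using less.prems by blast
  next
    case False
    then obtain a b p q where ab: "a \<in> F" "b \<in> F" "a \<noteq> b"
      and p: "p \<in> polygon S (fst a) (snd a)" and q: "q \<in> polygon S (fst b) (snd b)"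
      and pq: "eucnorm (p - q) \<le> k"
      unfolding separated_def by (meson not_less)
    define new where "new = (fst a + fst b - rv q, snd a + snd b + m)"
    define F' where "F' = insert new (F - {a, b})"
    have smaller: "card F' < card F"
    proof -
      have "card F' \<le> Suc (card (F - {a, b}))"
        unfolding F'_def using less.prems(1) by (simp add: card_insert_if)
      moreover have "card (F - {a, b}) = card F - 2" "2 \<le> card F"
        using ab less.prems(1) card_mono[of F "{a, b}"] by (auto simp: card_Diff_subset)
      ultimately show ?thesis by linarith
    qed
    have "finite F'" "\<forall>c\<in>F'. 0 \<le> snd c"
      unfolding F'_def new_def using less.prems ab \<open>0 \<le> m\<close> by auto
    then obtain G where G: "finite G" "\<forall>c\<in>G. 0 \<le> snd c"
      "(\<Union>c\<in>F'. polygon S (fst c) (snd c)) \<subseteq> (\<Union>c\<in>G. polygon S (fst c) (snd c))"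
      "weight m G \<le> weight m F'" "separated S k G"
      using less.hyps[OF smaller] by blast
    have "polygon S (fst a) (snd a) \<union> polygon S (fst b) (snd b) \<subseteq> polygon S (fst new) (snd new)"
      unfolding new_def using polygon_merge[OF step \<open>0 \<le> m\<close> p q pq] by simp
    then have "(\<Union>c\<in>F. polygon S (fst c) (snd c)) \<subseteq> (\<Union>c\<in>F'. polygon S (fst c) (snd c))"
      unfolding F'_def by blast
    moreover have "weight m F' \<le> weight m F"
    proof -
      have "weight m F = weight m (F - {a, b}) + (snd a + m) + (snd b + m)"
        using less.prems(1) ab sum.subset_diff[of "{a, b}" F "\<lambda>c. snd c + m"]
        by (simp add: weight_def)
      moreover have "weight m F' \<le> weight m (F - {a, b}) + (snd new + m)"
        unfolding F'_def using less.prems ab \<open>0 \<le> m\<close>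
        by (intro weight_insert_le) (auto simp: new_def)
      ultimately show ?thesis by (simp add: new_def)
    qed
    ultimately show ?thesis using G by (meson order_trans)
  qed
qed

lemma rules_nonempty:
  assumes "1 \<le> alpha_fam U"
  shows "\<forall>X\<in>U. X \<noteq> {}"
proof -
  have "(1::real, 0::real) \<noteq> 0" by (simp add: zero_prod_def)
  then obtain u where "u \<in> {u. u \<noteq> 0 \<and> stable_direction U u}"
    using stable_direction_exists[OF assms] by blast
  then show ?thesis unfolding stable_direction_def by blast
qed

(* Start from one polygon of radius 0 around each site of B and merge: the
   closure [B] is covered by separated polygons of total weight at most m |B|. *)
lemma closure_in_separated_polygons:
  assumes uf: "update_family U" and stable: "\<forall>u\<in>S. stable_direction U u"
    and ne: "\<forall>X\<in>U. X \<noteq> {}"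
    and step: "\<And>u w. u \<in> S \<Longrightarrow> norm w \<le> kappa U \<Longrightarrow> rv u \<bullet> w \<le> m" and "0 \<le> m"
    and "finite B"
  shows "\<exists>G. finite G \<and> (\<forall>a\<in>G. 0 \<le> snd a) \<and>
           bp_closure U B \<subseteq> (\<Union>a\<in>G. polygon S (fst a) (snd a)) \<and>
           weight m G \<le> m * real (card B) \<and> separated S (kappa U) G"
proof -
  define F where "F = (\<lambda>b. (rv b, 0::real)) ` B"
  obtain G where G: "finite G" "\<forall>a\<in>G. 0 \<le> snd a"
    "(\<Union>a\<in>F. polygon S (fst a) (snd a)) \<subseteq> (\<Union>a\<in>G. polygon S (fst a) (snd a))"
    "weight m G \<le> weight m F" "separated S (kappa U) G"
    using merge_into_separated[where S = S and k = "kappa U" and F = F, OF step \<open>0 \<le> m\<close>] \<open>finite B\<close> unfolding F_def by auto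
  have "B \<subseteq> (\<Union>a\<in>F. polygon S (fst a) (snd a))"
    unfolding F_def polygon_def by force
  then have "bp_closure U B \<subseteq> (\<Union>a\<in>G. polygon S (fst a) (snd a))"
    using G(3) by (intro bp_closure_least separated_polygons_closed[OF uf stable ne G(5)]) auto
  moreover have "weight m F = (\<Sum>a\<in>F. m)"
    unfolding weight_def F_def by (rule sum.cong) auto
  then have "weight m F = m * real (card F)" by simp
  then have "weight m F \<le> m * real (card B)"
    using \<open>finite B\<close> \<open>0 \<le> m\<close> by (simp add: F_def card_image_le mult_left_mono)
  ultimately show ?thesis using G by force
qed

lemma connected_closure_bounded:
  assumes uf: "update_family U" and stable: "\<forall>u\<in>S. stable_direction U u"
    and ne: "\<forall>X\<in>U. X \<noteq> {}" and span: "uniformly_spanning S \<delta>"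
    and step: "\<And>u w. u \<in> S \<Longrightarrow> norm w \<le> kappa U \<Longrightarrow> rv u \<bullet> w \<le> m" and "0 \<le> m"
    and "finite B" and L: "L \<subseteq> bp_closure U B" "strongly_connected (kappa U) L"
    and "x \<in> L" and "y \<in> L"
  shows "eucnorm (x - y) \<le> 2 * m * real (card B) / \<delta>"
proof -
  obtain G where G: "finite G" "\<forall>a\<in>G. 0 \<le> snd a"
    "bp_closure U B \<subseteq> (\<Union>a\<in>G. polygon S (fst a) (snd a))"
    "weight m G \<le> m * real (card B)" "separated S (kappa U) G"
    using closure_in_separated_polygons[OF uf stable ne step \<open>0 \<le> m\<close> \<open>finite B\<close>] by blast
  obtain a where a: "a \<in> G" "x \<in> polygon S (fst a) (snd a)"
    using G(3) L(1) \<open>x \<in> L\<close> by blast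
  have in_a: "L \<subseteq> polygon S (fst a) (snd a)"
    using connected_in_one_polygon[OF G(5) _ L(2) \<open>x \<in> L\<close> a] G(3) L(1) by blast
  have "snd a + m \<le> weight m G"
    unfolding weight_def using G(1,2) a(1) \<open>0 \<le> m\<close> by (intro member_le_sum) auto
  then have radius: "snd a \<le> m * real (card B)" using G(4) \<open>0 \<le> m\<close> by linarith
  have near: "norm (rv z - fst a) \<le> m * real (card B) / \<delta>" if "z \<in> L" for z
  proof -
    have "0 < \<delta>" using span unfolding uniformly_spanning_def by blast
    then have "snd a / \<delta> \<le> m * real (card B) / \<delta>" using radius by (simp add: divide_right_mono)
    moreover have "norm (rv z - fst a) \<le> snd a / \<delta>"
      using polygon_radius[OF span] in_a that by blast
    ultimately show ?thesis by linarith
  qed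
  have "norm ((rv x - fst a) - (rv y - fst a)) \<le> norm (rv x - fst a) + norm (rv y - fst a)"
    by (rule norm_triangle_ineq4)
  also have "\<dots> \<le> 2 * m * real (card B) / \<delta>"
    using near[OF \<open>x \<in> L\<close>] near[OF \<open>y \<in> L\<close>] by simp
  finally have "norm ((rv x - fst a) - (rv y - fst a)) \<le> 2 * m * real (card B) / \<delta>" .
  then show ?thesis by (simp add: norm_rv[symmetric])
qed

lemma connected_closure_diameter:
  assumes "update_family U" and "1 \<le> alpha_fam U"
  shows "\<exists>C\<ge>0. \<forall>B L x y. finite B \<longrightarrow> L \<subseteq> bp_closure U B \<longrightarrow>
           strongly_connected (kappa U) L \<longrightarrow> x \<in> L \<longrightarrow> y \<in> L \<longrightarrow>
           eucnorm (x - y) \<le> C * real (card B)"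
proof -
  obtain S \<delta> where S: "finite S" "S \<subseteq> {u. u \<noteq> 0 \<and> stable_direction U u}"
    and span: "uniformly_spanning S \<delta>"
    using uniformly_spanning_exists[OF stable_direction_exists[OF assms(2)]] by blast
  obtain M where M: "1 \<le> M" "\<forall>u\<in>S. norm (rv u) \<le> M"
    using finite_norm_bound[OF S(1)] by blast
  define m where "m = M * max 0 (kappa U)"
  have step: "rv u \<bullet> w \<le> m" if "u \<in> S" "norm w \<le> kappa U" for u w
  proof -
    have "rv u \<bullet> w \<le> norm (rv u) * norm w" by (rule norm_cauchy_schwarz)
    also have "\<dots> \<le> M * max 0 (kappa U)"
      using M that by (intro mult_mono) auto
    finally show ?thesis unfolding m_def .
  qed
  have "0 \<le> m" unfolding m_def using M(1) by simp
  have "0 < \<delta>" using span unfolding uniformly_spanning_def by blast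
  have stable: "\<forall>u\<in>S. stable_direction U u" using S(2) by blast
  have "eucnorm (x - y) \<le> 2 * m / \<delta> * real (card B)"
    if "finite B" "L \<subseteq> bp_closure U B" "strongly_connected (kappa U) L" "x \<in> L" "y \<in> L"
    for B L x y
    using connected_closure_bounded[OF assms(1) stable rules_nonempty[OF assms(2)] span step
        \<open>0 \<le> m\<close> that] by simp
  moreover have "0 \<le> 2 * m / \<delta>" using \<open>0 \<le> m\<close> \<open>0 < \<delta>\<close> by simp
  ultimately show ?thesis by blast
qed

lemma droplet_directions_span:
  assumes "us \<noteq> 0" and "0 < cross us ul" and "cross us ur < 0" and "v \<noteq> 0"
  shows "\<exists>u\<in>{us, - us, ul, ur}. 0 < rv u \<bullet> v"
proof -
  define a b where "a = real_of_int (fst us)" and "b = real_of_int (snd us)"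
  define d w where "d = rv us \<bullet> v" and "w = a * snd v - b * fst v"
  have "0 < a\<^sup>2 + b\<^sup>2"
    using assms(1) unfolding a_def b_def
    by (cases us) (auto simp: zero_prod_def sum_power2_gt_zero_iff)
  have decompose: "(a\<^sup>2 + b\<^sup>2) * (rv u \<bullet> v)
      = real_of_int (cross us u) * w + (rv us \<bullet> rv u) * d" for u
    unfolding d_def w_def a_def b_def by (simp add: inner_rv cross_def algebra_simps power2_eq_square)
  consider "0 < d" | "d < 0" | "d = 0" "0 < w" | "d = 0" "w < 0" | "d = 0" "w = 0"
    by linarith
  then show ?thesis
  proof cases
    case 1
    then show ?thesis unfolding d_def by blast
  next
    case 2
    then have "0 < rv (- us) \<bullet> v" unfolding d_def by (simp add: inner_rv)
    then show ?thesis by blast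
  next
    case 3
    then have "0 < (a\<^sup>2 + b\<^sup>2) * (rv ul \<bullet> v)" using decompose[of ul] assms(2) by simp
    then have "0 < rv ul \<bullet> v" using \<open>0 < a\<^sup>2 + b\<^sup>2\<close> by (simp add: zero_less_mult_iff)
    then show ?thesis by blast
  next
    case 4
    then have "0 < (a\<^sup>2 + b\<^sup>2) * (rv ur \<bullet> v)" using decompose[of ur] assms(3) by (simp add: mult_neg_neg)
    then have "0 < rv ur \<bullet> v" using \<open>0 < a\<^sup>2 + b\<^sup>2\<close> by (simp add: zero_less_mult_iff)
    then show ?thesis by blast
  next
    case 5
    have "(a\<^sup>2 + b\<^sup>2) * fst v = a * d - b * w" "(a\<^sup>2 + b\<^sup>2) * snd v = b * d + a * w"
      unfolding d_def w_def a_def b_def by (simp_all add: inner_rv algebra_simps power2_eq_square)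
    then have "v = 0" using 5 \<open>0 < a\<^sup>2 + b\<^sup>2\<close> by (auto simp: prod_eq_iff)
    then show ?thesis using assms(4) by blast
  qed
qed

(* A droplet with normals S is determined by one offset per direction; shifting
   them out to x0 + t u with t > R gives a droplet containing L, so the smallest
   droplet D containing L stays within distance (R + 1) M^2 / \<delta> of x0. *)
lemma smallest_droplet_near:
  assumes span: "uniformly_spanning S \<delta>" and nonzero: "\<forall>u\<in>S. u \<noteq> 0"
    and M: "\<forall>u\<in>S. norm (rv u) \<le> M"
    and D: "smallest_droplet S L D" and "x0 \<in> L" and R: "\<forall>x\<in>L. eucnorm (x - x0) \<le> R"
  shows "\<forall>x\<in>D. norm (rv x - rv x0) \<le> (R + 1) * M\<^sup>2 / \<delta>"
proof -
  define t :: int where "t = \<lfloor>R\<rfloor> + 1"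
  have "0 \<le> R" using R \<open>x0 \<in> L\<close> by (force simp: eucnorm_def)
  then have t: "R < t" "t \<le> R + 1" "0 < t" unfolding t_def by linarith+
  define a where "a = (\<lambda>u::pt. x0 + (t * fst u, t * snd u))"
  have shifted: "real_of_int (dot (x - a u) u) = rv u \<bullet> (rv x - rv x0) - t * (norm (rv u))\<^sup>2"
    for x u
  proof -
    have "rv (a u) = rv x0 + real_of_int t *\<^sub>R rv u"
      by (simp add: a_def rv_def)
    then show ?thesis
      by (simp add: dot_eq_inner power2_norm_eq_inner inner_diff_left inner_diff_right
          inner_add_left inner_add_right inner_commute)
  qed
  have "L \<subseteq> (\<Inter>u\<in>S. halfplane u (a u))"
  proof (intro subsetI INT_I)
    fix x u assume "x \<in> L" "u \<in> S"
    have "1 \<le> norm (rv u)" using nonzero \<open>u \<in> S\<close> norm_rv_ge_1 by blast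
    have "rv u \<bullet> (rv x - rv x0) \<le> norm (rv u) * norm (rv x - rv x0)"
      by (rule norm_cauchy_schwarz)
    also have "\<dots> \<le> norm (rv u) * R"
      using R \<open>x \<in> L\<close> by (intro mult_left_mono) (auto simp: norm_rv[symmetric])
    also have "\<dots> < norm (rv u) * t"
      using t(1) \<open>1 \<le> norm (rv u)\<close> by (intro mult_strict_left_mono) auto
    also have "\<dots> \<le> t * (norm (rv u))\<^sup>2"
    proof -
      have "norm (rv u) * 1 \<le> norm (rv u) * norm (rv u)"
        using \<open>1 \<le> norm (rv u)\<close> by (intro mult_left_mono) auto
      then have "real_of_int t * norm (rv u) \<le> real_of_int t * (norm (rv u) * norm (rv u))"
        using t(3) by (intro mult_left_mono) auto
      then show ?thesis by (simp add: power2_eq_square mult.commute)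
    qed
    finally have "real_of_int (dot (x - a u) u) < 0" unfolding shifted by simp
    then show "x \<in> halfplane u (a u)" by (simp add: halfplane_def)
  qed
  moreover have "is_droplet S (\<Inter>u\<in>S. halfplane u (a u))"
    using calculation \<open>x0 \<in> L\<close> unfolding is_droplet_def by blast
  ultimately have D_sub: "D \<subseteq> (\<Inter>u\<in>S. halfplane u (a u))"
    using D unfolding smallest_droplet_def by blast
  have "rv u \<bullet> (rv x - rv x0) \<le> (R + 1) * M\<^sup>2" if "x \<in> D" "u \<in> S" for x u
  proof -
    have "real_of_int (dot (x - a u) u) < 0" using D_sub that by (auto simp: halfplane_def)
    then have "rv u \<bullet> (rv x - rv x0) < t * (norm (rv u))\<^sup>2" unfolding shifted by simp
    also have "\<dots> \<le> (R + 1) * M\<^sup>2"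
      using t M that(2) by (intro mult_mono power_mono) auto
    finally show ?thesis by simp
  qed
  then show ?thesis using uniformly_spanning_norm_bound[OF span] by blast
qed

lemma diam_le_of_radius:
  assumes "x0 \<in> D" and near: "\<forall>x\<in>D. norm (rv x - rv x0) \<le> r"
  shows "finite D" and "diam D \<le> 2 * r"
proof -
  have "D \<subseteq> {x. norm (rv x - rv x0) \<le> r}" using near by blast
  then show "finite D" by (rule finite_subset[OF _ finite_bounded_points])
  let ?T = "{eucnorm (x - y) | x y. x \<in> D \<and> y \<in> D}"
  have "?T \<subseteq> (\<lambda>(x, y). eucnorm (x - y)) ` (D \<times> D)" by fastforce
  then have "finite ?T" using \<open>finite D\<close> finite_subset by blast
  moreover have "?T \<noteq> {}" using \<open>x0 \<in> D\<close> by blast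
  moreover have "z \<le> 2 * r" if "z \<in> ?T" for z
  proof -
    obtain x y where xy: "z = eucnorm (x - y)" "x \<in> D" "y \<in> D" using \<open>z \<in> ?T\<close> by blast
    have "z = norm ((rv x - rv x0) - (rv y - rv x0))"
      using xy(1) norm_rv[of "x - y"] by simp
    also have "\<dots> \<le> norm (rv x - rv x0) + norm (rv y - rv x0)"
      by (rule norm_triangle_ineq4)
    also have "\<dots> \<le> 2 * r"
    proof -
      have "norm (rv x - rv x0) \<le> r" "norm (rv y - rv x0) \<le> r" using near xy(2,3) by blast+
      then show ?thesis by linarith
    qed
    finally show ?thesis .
  qed
  ultimately show "diam D \<le> 2 * r" unfolding diam_def by simp
qed

lemma positively_spanning_uniform:
  assumes "\<And>v. v \<noteq> 0 \<Longrightarrow> \<exists>u\<in>S. 0 < rv u \<bullet> v"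
  shows "\<exists>\<delta>. uniformly_spanning S \<delta>"
proof -
  obtain S' \<delta> where "S' \<subseteq> S" and "uniformly_spanning S' \<delta>"
    using uniformly_spanning_exists[OF assms] by blast
  then show ?thesis unfolding uniformly_spanning_def by blast
qed

lemma droplet_finite:
  assumes "finite S" and span: "uniformly_spanning S \<delta>" and "is_droplet S D"
  shows "finite D"
proof -
  obtain a where D: "D = (\<Inter>u\<in>S. halfplane u (a u))"
    using assms(3) unfolding is_droplet_def by blast
  define T where "T = Max (insert 0 ((\<lambda>u. real_of_int (dot (a u) u)) ` S))"
  have "rv u \<bullet> (rv x - 0) \<le> T" if "x \<in> D" "u \<in> S" for x u
  proof -
    have "dot x u < dot (a u) u"
      using that unfolding D halfplane_def by (auto simp: dot_def algebra_simps)
    then have "real_of_int (dot x u) < real_of_int (dot (a u) u)" by simp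
    moreover have "real_of_int (dot (a u) u) \<le> T"
      unfolding T_def using \<open>finite S\<close> \<open>u \<in> S\<close> by simp
    moreover have "rv u \<bullet> (rv x - 0) = real_of_int (dot x u)"
      by (simp add: dot_eq_inner inner_commute)
    ultimately show ?thesis by linarith
  qed
  then have "D \<subseteq> {x. norm (rv x - 0) \<le> T / \<delta>}"
    using uniformly_spanning_norm_bound[OF span] by blast
  then show ?thesis by (rule finite_subset[OF _ finite_bounded_points])
qed

lemma smallest_droplet_diameter:
  assumes "finite S" and nonzero: "\<forall>u\<in>S. u \<noteq> 0" and span: "uniformly_spanning S \<delta>"
  shows "\<exists>C\<ge>0. \<forall>L D R. smallest_droplet S L D \<longrightarrow> L \<noteq> {} \<longrightarrow>
           (\<forall>x\<in>L. \<forall>y\<in>L. eucnorm (x - y) \<le> R) \<longrightarrow> diam D \<le> C * (R + 1)"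
proof -
  obtain M where M: "\<forall>u\<in>S. norm (rv u) \<le> M"
    using finite_norm_bound[OF \<open>finite S\<close>] by blast
  have "diam D \<le> 2 * M\<^sup>2 / \<delta> * (R + 1)"
    if D: "smallest_droplet S L D" and "x0 \<in> L" and R: "\<forall>x\<in>L. \<forall>y\<in>L. eucnorm (x - y) \<le> R"
    for L D R x0
  proof -
    have near: "\<forall>x\<in>D. norm (rv x - rv x0) \<le> (R + 1) * M\<^sup>2 / \<delta>"
      using smallest_droplet_near[OF span nonzero M D \<open>x0 \<in> L\<close>] R \<open>x0 \<in> L\<close> by blast
    have "x0 \<in> D" using D \<open>x0 \<in> L\<close> unfolding smallest_droplet_def by blast
    then show ?thesis using diam_le_of_radius(2)[OF _ near] by (simp add: field_simps)
  qed
  moreover have "0 \<le> 2 * M\<^sup>2 / \<delta>" using span unfolding uniformly_spanning_def by simp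
  ultimately show ?thesis by blast
qed

lemma internally_spanned_diameter:
  assumes uf: "update_family U" and alpha: "1 \<le> alpha_fam U"
    and "finite S" and "\<forall>u\<in>S. u \<noteq> 0" and "uniformly_spanning S \<delta>"
  shows "\<exists>C\<ge>0. \<forall>A D. internally_spanned U S D A \<longrightarrow> diam D \<le> C * real (card (D \<inter> A))"
proof -
  obtain C1 where C1: "0 \<le> C1" "\<forall>B L x y. finite B \<longrightarrow> L \<subseteq> bp_closure U B \<longrightarrow>
      strongly_connected (kappa U) L \<longrightarrow> x \<in> L \<longrightarrow> y \<in> L \<longrightarrow> eucnorm (x - y) \<le> C1 * real (card B)"
    using connected_closure_diameter[OF uf alpha] by blast
  obtain C2 where C2: "0 \<le> C2" "\<forall>L D R. smallest_droplet S L D \<longrightarrow> L \<noteq> {} \<longrightarrow>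
      (\<forall>x\<in>L. \<forall>y\<in>L. eucnorm (x - y) \<le> R) \<longrightarrow> diam D \<le> C2 * (R + 1)"
    using smallest_droplet_diameter[OF assms(3-5)] by blast
  have "diam D \<le> C2 * (C1 + 1) * real (card (D \<inter> A))" if spanned: "internally_spanned U S D A" for A D
  proof -
    obtain L where L: "L \<subseteq> bp_closure U (D \<inter> A)" "strongly_connected (kappa U) L"
      "smallest_droplet S L D"
      using spanned unfolding internally_spanned_def by blast
    have "L \<noteq> {}" using L(2) by (simp add: strongly_connected_def)
    have "is_droplet S D" using L(3) by (simp add: smallest_droplet_def)
    then have "finite (D \<inter> A)" using droplet_finite[OF assms(3,5)] by simp
    then have "\<forall>x\<in>L. \<forall>y\<in>L. eucnorm (x - y) \<le> C1 * real (card (D \<inter> A))"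
      using C1(2) L(1,2) by blast
    then have "diam D \<le> C2 * (C1 * real (card (D \<inter> A)) + 1)"
      using C2(2) L(3) \<open>L \<noteq> {}\<close> by blast
    moreover have "D \<inter> A \<noteq> {}"
      using L(1) \<open>L \<noteq> {}\<close> bp_closure_empty[OF rules_nonempty[OF alpha]] by auto
    then have "1 \<le> real (card (D \<inter> A))"
      using \<open>finite (D \<inter> A)\<close> by (simp add: Suc_leI card_gt_0_iff)
    then have "C2 * 1 \<le> C2 * real (card (D \<inter> A))"
      using C2(1) by (rule mult_left_mono)
    then have "C2 * (C1 * real (card (D \<inter> A)) + 1) \<le> C2 * (C1 + 1) * real (card (D \<inter> A))"
      by (simp add: algebra_simps)
    ultimately show ?thesis by linarith
  qed
  moreover have "0 \<le> C2 * (C1 + 1)" using C1(1) C2(1) by simp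
  ultimately show ?thesis by blast
qed

theorem mainTheorem10:
  fixes U :: "pt set set" and us ul ur :: pt
  assumes "update_family U"
    and "unbalanced_critical U"
    and "us \<noteq> 0" and "ul \<noteq> 0" and "ur \<noteq> 0"
    and "cross us ul > 0" and "cross us ur < 0"
    and "min (alpha_dir U us) (alpha_dir U (- us)) \<ge> alpha_fam U + 1"
    and "min (alpha_bar U ul) (alpha_bar U ur) = alpha_fam U"
  shows "\<exists>c>0. \<forall>A D. internally_spanned U {us, - us, ul, ur} D A \<longrightarrow>
           real (card (D \<inter> A)) \<ge> c * diam D"
proof -
  let ?S = "{us, - us, ul, ur}"
  have alpha: "1 \<le> alpha_fam U"
    using assms(2) unfolding unbalanced_critical_def by blast
  obtain \<delta> where span: "uniformly_spanning ?S \<delta>"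
    using positively_spanning_uniform[OF droplet_directions_span[OF assms(3,6,7)]] by blast
  have nonzero: "\<forall>u\<in>?S. u \<noteq> 0" using assms(3-5) by auto
  obtain C where "0 \<le> C"
    and C: "\<forall>A D. internally_spanned U ?S D A \<longrightarrow> diam D \<le> C * real (card (D \<inter> A))"
    using internally_spanned_diameter[OF assms(1) alpha _ nonzero span] by blast
  have "1 / (C + 1) * diam D \<le> real (card (D \<inter> A))" if "internally_spanned U ?S D A" for A D
  proof -
    have "diam D \<le> C * real (card (D \<inter> A))" using C that by blast
    also have "\<dots> \<le> (C + 1) * real (card (D \<inter> A))" by (simp add: mult_right_mono)
    finally show ?thesis using \<open>0 \<le> C\<close> by (simp add: field_simps)
  qed
  moreover have "0 < 1 / (C + 1)" using \<open>0 \<le> C\<close> by simp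
  ultimately show ?thesis by blast
qed

end
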